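(* Let $f:\mathbb{R}^n\times\mathbb{R}\to\mathbb{R}^n$ be $C^1$, let $\lambda_-<\lambda_+$ and let $\Lambda$ be a parameter shift from $\lambda_-$ to $\lambda_+$. For $r>0$ let $\Phi$ be the solution cocycle of $\dot x=f(x,\Lambda(rt))$, and for fixed $\lambda$ let $\phi_\lambda$ be the flow of $\dot x=f(x,\lambda)$. Suppose $\lambda\mapsto A(\lambda)$, $\lambda\in[\lambda_-,\lambda_+]$, is a branch of attractors that is uniformly stable, and set $A_\pm=A(\lambda_\pm)$. For $r>0$, $\eta>0$ and $t\in\mathbb{R}$ define the pullback attractor fibres $$A_t^{[\Lambda,r,A_-]}:=\bigcap_{\tau>0}\overline{\bigcup_{s\le-\tau}\Phi\big(t,s,\mathcal{N}_{\eta}(A_-)\big)},$$ with $\eta>0$ sufficiently small that this set does not depend on $\eta$. Then for all $\epsilon>0$ there exists $\delta>0$ such that $$d\big(A_t^{[\Lambda,r,A_-]},A(\Lambda(rt))\big)<\epsilon$$ for all $0<r<\delta$ and all $t\in\mathbb{R}$. Moreover, there is $\delta>0$ such that for all $0<r<\delta$ there is tracking, i.e. $A_{+\infty}^{[\Lambda,r,A_-]}\subset A_+$, where $A_{+\infty}^{[\Lambda,r,A_-]}=\bigcap_{\tau>0}\overline{\bigcup_{t\ge\tau}A_t^{[\Lambda,r,A_-]}}$.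
   Context: A parameter shift from $\lambda_-$ to $\lambda_+$ is a smooth $\Lambda:\mathbb{R}\to(\lambda_-,\lambda_+)$ with $\lim_{\tau\to\pm\infty}\Lambda(\tau)=\lambda_\pm$ and $\lim_{\tau\to\pm\infty}\Lambda'(\tau)=0$. Solutions are assumed to exist for all time; $\Phi(t,s,x_0)$ is the value at time $t$ of the solution with $x(s)=x_0$. For nonempty compact $X,Y\subset\mathbb{R}^n$, $d(X,Y)=\sup_{x\in X}\inf_{y\in Y}\|x-y\|$, $d_H(X,Y)=\max\{d(X,Y),d(Y,X)\}$, and $\mathcal{N}_\eta(M)=\{x:d(x,M)<\eta\}$. A connected compact $\phi_\lambda$-invariant set $M$ is an exponentially stable attractor if there are $\mu>0$, $\eta>0$, $C\ge1$ with $d(\phi_\lambda(t,x),M)\le Ce^{-\mu t}d(x,M)$ for all $x\in\mathcal{N}_\eta(M)$ and $t>0$. A branch of attractors is a map $\lambda\mapsto A(\lambda)$, continuous with respect to $d_H$, such that each $A(\lambda)$ is an exponentially stable attractor of $\phi_\lambda$; it is uniformly stable if the constants $\mu,\eta,C$ can be chosen independent of $\lambda\in[\lambda_-,\lambda_+]$. (Since $A_-$ is in particular asymptotically stable for $\phi_{\lambda_-}$, the fibres defined in the claim are independent of $\eta$ for all sufficiently small $\eta>0$.) *)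

theory Defs
  imports "HOL-Analysis.Analysis"
begin

definition C1_map :: "('a::euclidean_space \<Rightarrow> real \<Rightarrow> 'a) \<Rightarrow> bool" where
  "C1_map f \<longleftrightarrow> (\<exists>D :: 'a \<times> real \<Rightarrow> ('a \<times> real) \<Rightarrow>\<^sub>L 'a.
      (\<forall>p. ((\<lambda>q. f (fst q) (snd q)) has_derivative blinfun_apply (D p)) (at p))
      \<and> continuous_on UNIV D)"

definition smooth_fun :: "(real \<Rightarrow> real) \<Rightarrow> bool" where
  "smooth_fun g \<longleftrightarrow> (\<exists>D :: nat \<Rightarrow> real \<Rightarrow> real. D 0 = g \<and>
      (\<forall>k t. (D k has_real_derivative D (Suc k) t) (at t)))"

definition parameter_shift :: "(real \<Rightarrow> real) \<Rightarrow> real \<Rightarrow> real \<Rightarrow> bool" where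
  "parameter_shift \<Lambda> lm lp \<longleftrightarrow> smooth_fun \<Lambda> \<and> (\<forall>t. lm < \<Lambda> t \<and> \<Lambda> t < lp)
     \<and> (\<Lambda> \<longlongrightarrow> lm) at_bot \<and> (\<Lambda> \<longlongrightarrow> lp) at_top
     \<and> ((\<lambda>t. deriv \<Lambda> t) \<longlongrightarrow> 0) at_bot \<and> ((\<lambda>t. deriv \<Lambda> t) \<longlongrightarrow> 0) at_top"

definition is_solution :: "(real \<Rightarrow> 'a::euclidean_space \<Rightarrow> 'a) \<Rightarrow> (real \<Rightarrow> 'a) \<Rightarrow> bool" where
  "is_solution g x \<longleftrightarrow> (\<forall>t. (x has_vector_derivative g t (x t)) (at t))"

definition sol_map :: "(real \<Rightarrow> 'a::euclidean_space \<Rightarrow> 'a) \<Rightarrow> real \<Rightarrow> real \<Rightarrow> 'a \<Rightarrow> 'a" where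
  "sol_map g t s x0 = (THE y. \<exists>x. is_solution g x \<and> x s = x0 \<and> x t = y)"

definition cocycle :: "('a::euclidean_space \<Rightarrow> real \<Rightarrow> 'a) \<Rightarrow> (real \<Rightarrow> real) \<Rightarrow> real \<Rightarrow> real \<Rightarrow> real \<Rightarrow> 'a \<Rightarrow> 'a" where
  "cocycle f \<Lambda> r t s x0 = sol_map (\<lambda>t x. f x (\<Lambda> (r * t))) t s x0"

definition flow_of :: "('a::euclidean_space \<Rightarrow> real \<Rightarrow> 'a) \<Rightarrow> real \<Rightarrow> real \<Rightarrow> 'a \<Rightarrow> 'a" where
  "flow_of f l t x0 = sol_map (\<lambda>t x. f x l) t 0 x0"

definition semidist :: "'a::metric_space set \<Rightarrow> 'a set \<Rightarrow> real" where
  "semidist X Y = (if X = {} then 0 else (SUP x\<in>X. infdist x Y))"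

definition hausdist_sets :: "'a::metric_space set \<Rightarrow> 'a set \<Rightarrow> real" where
  "hausdist_sets X Y = max (semidist X Y) (semidist Y X)"

definition nbhd :: "real \<Rightarrow> 'a::metric_space set \<Rightarrow> 'a set" where
  "nbhd \<eta> M = {x. infdist x M < \<eta>}"

definition invariant_set :: "(real \<Rightarrow> 'a \<Rightarrow> 'a) \<Rightarrow> 'a set \<Rightarrow> bool" where
  "invariant_set \<phi> M \<longleftrightarrow> (\<forall>t. \<phi> t ` M = M)"

definition exp_stable_attractor_with ::
  "(real \<Rightarrow> 'a::euclidean_space \<Rightarrow> 'a) \<Rightarrow> 'a set \<Rightarrow> real \<Rightarrow> real \<Rightarrow> real \<Rightarrow> bool" where
  "exp_stable_attractor_with \<phi> M \<mu> \<eta> C \<longleftrightarrow>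
     M \<noteq> {} \<and> compact M \<and> connected M \<and> invariant_set \<phi> M \<and>
     \<mu> > 0 \<and> \<eta> > 0 \<and> C \<ge> 1 \<and>
     (\<forall>x\<in>nbhd \<eta> M. \<forall>t>0. infdist (\<phi> t x) M \<le> C * exp (- \<mu> * t) * infdist x M)"

definition exp_stable_attractor :: "(real \<Rightarrow> 'a::euclidean_space \<Rightarrow> 'a) \<Rightarrow> 'a set \<Rightarrow> bool" where
  "exp_stable_attractor \<phi> M \<longleftrightarrow> (\<exists>\<mu> \<eta> C. exp_stable_attractor_with \<phi> M \<mu> \<eta> C)"

definition branch_of_attractors ::
  "('a::euclidean_space \<Rightarrow> real \<Rightarrow> 'a) \<Rightarrow> real \<Rightarrow> real \<Rightarrow> (real \<Rightarrow> 'a set) \<Rightarrow> bool" where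
  "branch_of_attractors f lm lp A \<longleftrightarrow>
     (\<forall>l\<in>{lm..lp}. \<forall>e>0. \<exists>d>0. \<forall>l'\<in>{lm..lp}. \<bar>l' - l\<bar> < d \<longrightarrow> hausdist_sets (A l') (A l) < e)
     \<and> (\<forall>l\<in>{lm..lp}. exp_stable_attractor (flow_of f l) (A l))"

definition uniformly_stable_branch ::
  "('a::euclidean_space \<Rightarrow> real \<Rightarrow> 'a) \<Rightarrow> real \<Rightarrow> real \<Rightarrow> (real \<Rightarrow> 'a set) \<Rightarrow> bool" where
  "uniformly_stable_branch f lm lp A \<longleftrightarrow> branch_of_attractors f lm lp A \<and>
     (\<exists>\<mu> \<eta> C. \<forall>l\<in>{lm..lp}. exp_stable_attractor_with (flow_of f l) (A l) \<mu> \<eta> C)"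

definition pullback_set_eta ::
  "('a::euclidean_space \<Rightarrow> real \<Rightarrow> 'a) \<Rightarrow> (real \<Rightarrow> real) \<Rightarrow> real \<Rightarrow> 'a set \<Rightarrow> real \<Rightarrow> real \<Rightarrow> 'a set" where
  "pullback_set_eta f \<Lambda> r Am \<eta> t =
     (\<Inter>\<tau>\<in>{0<..}. closure (\<Union>s\<in>{..-\<tau>}. cocycle f \<Lambda> r t s ` nbhd \<eta> Am))"

definition pullback_fibre ::
  "('a::euclidean_space \<Rightarrow> real \<Rightarrow> 'a) \<Rightarrow> (real \<Rightarrow> real) \<Rightarrow> real \<Rightarrow> 'a set \<Rightarrow> real \<Rightarrow> 'a set" where
  "pullback_fibre f \<Lambda> r Am t =
     (THE S. \<exists>\<eta>0>0. \<forall>\<eta>. 0 < \<eta> \<and> \<eta> < \<eta>0 \<longrightarrow> pullback_set_eta f \<Lambda> r Am \<eta> t = S)"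

definition pullback_limit_set ::
  "('a::euclidean_space \<Rightarrow> real \<Rightarrow> 'a) \<Rightarrow> (real \<Rightarrow> real) \<Rightarrow> real \<Rightarrow> 'a set \<Rightarrow> 'a set" where
  "pullback_limit_set f \<Lambda> r Am =
     (\<Inter>\<tau>\<in>{0<..}. closure (\<Union>t\<in>{\<tau>..}. pullback_fibre f \<Lambda> r Am t))"

end

theory Submission
  imports Defs
begin

(* Fix uniform stability constants \<mu>, \<eta>0, C and a window length T after which each frozen
   flow has contracted distances to its attractor by the factor 1/4.  On a window of length T
   the parameter \<Lambda>(r t) moves by O(r), so by Gronwall the nonautonomous solution stays O(r)-close
   to the frozen flow at the initial parameter of the window.  Together with the Hausdorff
   continuity of the branch, this makes the \<rho>-neighbourhood of A(\<Lambda>(r t)) invariant from window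
   to window once r is small, and pullback fibres, being limits of trajectories started near A_-
   in the distant past, stay within (C + 1) \<rho> of A(\<Lambda>(r t)).  For tracking, once \<Lambda>(r t) is
   close to \<lambda>_+ each further window contracts the distance to A_+ up to an error that vanishes
   at late times. *)

section \<open>Gronwall estimates\<close>

lemma has_real_derivative_inner_self:
  fixes z :: "real \<Rightarrow> 'a::real_inner"
  assumes "(z has_vector_derivative z') (at s)"
  shows "((\<lambda>t. z t \<bullet> z t) has_real_derivative 2 * (z s \<bullet> z')) (at s)"
proof -
  from assms have dz: "(z has_derivative (\<lambda>h. h *\<^sub>R z')) (at s)"
    by (simp add: has_vector_derivative_def)
  have "((\<lambda>t. z t \<bullet> z t) has_derivative (\<lambda>h. z s \<bullet> (h *\<^sub>R z') + (h *\<^sub>R z') \<bullet> z s)) (at s)"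
    by (rule has_derivative_inner[OF dz dz])
  moreover have "(\<lambda>h. z s \<bullet> (h *\<^sub>R z') + (h *\<^sub>R z') \<bullet> z s) = (*) (2 * (z s \<bullet> z'))"
    by (auto simp: fun_eq_iff inner_commute algebra_simps)
  ultimately show ?thesis by (simp add: has_field_derivative_def)
qed

lemma gronwall_norm_diff_sq:
  fixes x y :: "real \<Rightarrow> 'a::real_inner"
  assumes ab: "a \<le> b" and L: "L \<ge> 0" and e: "e \<ge> 0"
    and dx: "\<And>t. t \<in> {a..b} \<Longrightarrow> (x has_vector_derivative x' t) (at t)"
    and dy: "\<And>t. t \<in> {a..b} \<Longrightarrow> (y has_vector_derivative y' t) (at t)"
    and lip: "\<And>t. t \<in> {a..b} \<Longrightarrow> norm (x' t - y' t) \<le> L * norm (x t - y t) + e"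
    and t: "t \<in> {a..b}"
  shows "norm (x t - y t)^2 \<le> (norm (x a - y a)^2 + e^2) * exp ((2*L+1)*(t-a))"
proof -
  define K where "K = 2*L+1"
  have K1: "K \<ge> 1" using L by (simp add: K_def)
  define z where "z = (\<lambda>t. x t - y t)"
  define p where "p = (\<lambda>t. (z t \<bullet> z t + e^2) * exp (- K * (t - a)))"
  have dz: "(z has_vector_derivative (x' s - y' s)) (at s)" if "s \<in> {a..b}" for s
    unfolding z_def using dx[OF that] dy[OF that] by (rule has_vector_derivative_diff)
  have bound: "2 * (z s \<bullet> (x' s - y' s)) \<le> K * (z s \<bullet> z s + e^2)" if "s \<in> {a..b}" for s
  proof -
    have "2 * (z s \<bullet> (x' s - y' s)) \<le> 2 * (norm (z s) * norm (x' s - y' s))"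
      using Cauchy_Schwarz_ineq2[of "z s" "x' s - y' s"] by simp
    also have "\<dots> \<le> 2 * (norm (z s) * (L * norm (z s) + e))"
      using lip[OF that] by (intro mult_left_mono) (auto simp: z_def)
    also have "\<dots> \<le> 2*L*norm (z s)^2 + (norm (z s)^2 + e^2)"
      using sum_squares_bound[of "norm (z s)" e] by (simp add: algebra_simps power2_eq_square)
    also have "\<dots> \<le> K * (norm (z s)^2 + e^2)"
      using K1 L by (simp add: K_def algebra_simps)
    finally show ?thesis by (simp add: power2_norm_eq_inner)
  qed
  have "p t \<le> p a"
  proof (rule DERIV_nonpos_imp_nonincreasing[of a t p])
    show "a \<le> t" using t by simp
    fix s assume "a \<le> s" "s \<le> t"
    then have sab: "s \<in> {a..b}" using t by auto
    have "(p has_real_derivative (2 * (z s \<bullet> (x' s - y' s)) * exp (- K * (s - a))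
        + (z s \<bullet> z s + e^2) * (exp (- K * (s - a)) * (- K)))) (at s)"
      unfolding p_def by (rule derivative_eq_intros has_real_derivative_inner_self[OF dz[OF sab]] | simp)+
    moreover have "2 * (z s \<bullet> (x' s - y' s)) * exp (- K * (s - a))
        \<le> K * (z s \<bullet> z s + e^2) * exp (- K * (s - a))"
      using bound[OF sab] by (intro mult_right_mono) auto
    then have "2 * (z s \<bullet> (x' s - y' s)) * exp (- K * (s - a))
        + (z s \<bullet> z s + e^2) * (exp (- K * (s - a)) * (- K)) \<le> 0"
      by (simp add: algebra_simps)
    ultimately show "\<exists>y. (p has_real_derivative y) (at s) \<and> y \<le> 0" by blast
  qed
  then have "(z t \<bullet> z t + e^2) * exp (- K * (t - a)) * exp (K * (t - a))
      \<le> (z a \<bullet> z a + e^2) * exp (K * (t - a))"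
    by (intro mult_right_mono) (auto simp: p_def)
  then have "z t \<bullet> z t + e^2 \<le> (z a \<bullet> z a + e^2) * exp (K * (t - a))"
    by (simp add: mult.assoc exp_add[symmetric])
  then show ?thesis
    by (simp add: z_def K_def power2_norm_eq_inner) (smt (verit) zero_le_power2)
qed

lemma continuous_bootstrap:
  fixes q :: "real \<Rightarrow> real"
  assumes ab: "a \<le> b" and cq: "continuous_on {a..b} q" and qa: "q a < 1" and \<beta>: "\<beta> < 1"
    and step: "\<And>c. c \<in> {a..b} \<Longrightarrow> \<forall>t\<in>{a..c}. q t \<le> 1 \<Longrightarrow> \<forall>t\<in>{a..c}. q t \<le> \<beta>"
  shows "\<forall>t\<in>{a..b}. q t \<le> \<beta>"
proof (cases "\<forall>t\<in>{a..b}. q t \<le> 1")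
  case True
  then show ?thesis using step[of b] ab by auto
next
  case False
  then obtain t0 where t0: "t0 \<in> {a..b}" "q t0 > 1" by force
  define S where "S = {a..b} \<inter> q -` {1}"
  have "\<exists>x. a \<le> x \<and> x \<le> t0 \<and> q x = 1"
    using t0 qa by (intro IVT') (auto intro: continuous_on_subset[OF cq])
  then obtain x0 where "a \<le> x0" "x0 \<le> t0" "q x0 = 1" by blast
  then have Sne: "S \<noteq> {}" using t0 unfolding S_def by fastforce
  have Scl: "closed S" unfolding S_def by (rule continuous_closed_preimage[OF cq]) auto
  have Sbd: "bdd_below S" by (auto simp: S_def bdd_below_def)
  \<comment> \<open>\<open>c\<close> is the first time at which \<open>q\<close> reaches 1\<close>
  define c where "c = Inf S"
  have cS: "c \<in> S" using closed_contains_Inf[OF Sne Sbd Scl] by (simp add: c_def)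
  have below: "q t \<le> 1" if "t \<in> {a..c}" for t
  proof (rule ccontr)
    assume "\<not> q t \<le> 1"
    then have "\<exists>x. a \<le> x \<and> x \<le> t \<and> q x = 1"
      using that qa cS by (intro IVT') (auto simp: S_def intro: continuous_on_subset[OF cq])
    then obtain x where x: "a \<le> x" "x \<le> t" "q x = 1" by blast
    then have "x \<in> S" using that cS by (auto simp: S_def)
    then have "c \<le> x" unfolding c_def using Sbd by (rule cInf_lower)
    then have "t = c" using x that by auto
    then show False using cS \<open>\<not> q t \<le> 1\<close> by (auto simp: S_def)
  qed
  have "\<forall>t\<in>{a..c}. q t \<le> \<beta>" using step[of c] below cS by (auto simp: S_def)
  moreover have "c \<in> {a..c}" using cS by (auto simp: S_def)
  ultimately have "q c \<le> \<beta>" by blast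
  then show ?thesis using cS \<beta> by (auto simp: S_def)
qed

lemma solutions_stay_close:
  fixes x y :: "real \<Rightarrow> 'a::euclidean_space" and f :: "'a \<Rightarrow> real \<Rightarrow> 'a"
  assumes lip: "\<And>u v l l'. norm u \<le> R \<Longrightarrow> norm v \<le> R \<Longrightarrow> l \<in> I \<Longrightarrow> l' \<in> I \<Longrightarrow>
        norm (f u l - f v l') \<le> L * (norm (u - v) + \<bar>l - l'\<bar>)"
    and L: "L \<ge> 0" and ab: "a \<le> b" and E: "E \<ge> 0"
    and dx: "\<And>t. (x has_vector_derivative f (x t) (lx t)) (at t)"
    and dy: "\<And>t. (y has_vector_derivative f (y t) (ly t)) (at t)"
    and lx: "\<And>t. t \<in> {a..b} \<Longrightarrow> lx t \<in> I"
    and ly: "\<And>t. t \<in> {a..b} \<Longrightarrow> ly t \<in> I"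
    and lE: "\<And>t. t \<in> {a..b} \<Longrightarrow> \<bar>lx t - ly t\<bar> \<le> E"
    and yR: "\<And>t. t \<in> {a..b} \<Longrightarrow> norm (y t) \<le> R - 1"
    and \<beta>0: "\<beta> \<ge> 0" and \<beta>1: "\<beta> < 1"
    and \<beta>: "(norm (x a - y a)^2 + (L*E)^2) * exp ((2*L+1)*(b-a)) \<le> \<beta>^2"
  shows "\<forall>t\<in>{a..b}. norm (x t - y t) \<le> \<beta>"
proof -
  have cx: "continuous_on {a..b} x"
    by (metis dx continuous_at_imp_continuous_on has_vector_derivative_continuous)
  have cy: "continuous_on {a..b} y"
    by (metis dy continuous_at_imp_continuous_on has_vector_derivative_continuous)
  have sq_le: "norm v \<le> \<beta>" if "norm v ^2 \<le> \<beta>^2" for v :: 'a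
    using power2_le_imp_le[OF that \<beta>0] .
  have "norm (x a - y a)^2 * 1 \<le> (norm (x a - y a)^2 + (L*E)^2) * exp ((2*L+1)*(b-a))"
    using L ab by (intro mult_mono) auto
  then have "norm (x a - y a) \<le> \<beta>" using \<beta> by (intro sq_le) linarith
  then have qa: "norm (x a - y a) < 1" using \<beta>1 by linarith
  show ?thesis
  proof (rule continuous_bootstrap[where q="\<lambda>t. norm (x t - y t)", OF ab _ qa \<beta>1])
    show "continuous_on {a..b} (\<lambda>t. norm (x t - y t))"
      by (intro continuous_intros cx cy)
    fix c assume c: "c \<in> {a..b}" and le1: "\<forall>t\<in>{a..c}. norm (x t - y t) \<le> 1"
    \<comment> \<open>while \<open>x\<close> stays within distance 1 of \<open>y\<close> it lies in the ball where \<open>f\<close> is Lipschitz\<close>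
    have close: "norm (f (x s) (lx s) - f (y s) (ly s)) \<le> L * norm (x s - y s) + L * E"
      if s: "s \<in> {a..c}" for s
    proof -
      have sab: "s \<in> {a..b}" using s c by auto
      have "norm (x s) \<le> norm (y s) + norm (x s - y s)" by (rule norm_triangle_sub)
      then have nx: "norm (x s) \<le> R" using le1 s yR[OF sab] by fastforce
      have "norm (f (x s) (lx s) - f (y s) (ly s)) \<le> L * (norm (x s - y s) + \<bar>lx s - ly s\<bar>)"
        using yR[OF sab] by (intro lip nx lx ly sab) simp
      also have "\<dots> \<le> L * (norm (x s - y s) + E)"
        using lE[OF sab] L by (intro mult_left_mono) auto
      finally show ?thesis by (simp add: algebra_simps)
    qed
    show "\<forall>t\<in>{a..c}. norm (x t - y t) \<le> \<beta>"
    proof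
      fix t assume t: "t \<in> {a..c}"
      have "norm (x t - y t)^2 \<le> (norm (x a - y a)^2 + (L*E)^2) * exp ((2*L+1)*(t-a))"
        using c L E t close by (intro gronwall_norm_diff_sq[OF _ _ _ dx dy]) auto
      also have "\<dots> \<le> (norm (x a - y a)^2 + (L*E)^2) * exp ((2*L+1)*(b-a))"
        using t c L by (intro mult_left_mono) auto
      finally show "norm (x t - y t) \<le> \<beta>" using \<beta> by (intro sq_le) linarith
    qed
  qed
qed

lemma solutions_agree_forward:
  fixes x y :: "real \<Rightarrow> 'a::real_inner"
  assumes ab: "a \<le> b" and L: "L \<ge> 0"
    and dx: "\<And>t. (x has_vector_derivative x' t) (at t)"
    and dy: "\<And>t. (y has_vector_derivative y' t) (at t)"
    and lip: "\<And>t. t \<in> {a..b} \<Longrightarrow> norm (x' t - y' t) \<le> L * norm (x t - y t)"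
    and eq: "x a = y a"
  shows "x b = y b"
proof -
  have "norm (x b - y b)^2 \<le> (norm (x a - y a)^2 + 0^2) * exp ((2*L+1)*(b-a))"
    by (rule gronwall_norm_diff_sq[OF ab L _ dx dy]) (use lip ab in auto)
  then show ?thesis using eq by simp
qed

section \<open>Lipschitz bounds and uniqueness of solutions\<close>

lemma C1_map_lipschitz_on_bounded:
  fixes f :: "'a::euclidean_space \<Rightarrow> real \<Rightarrow> 'a"
  assumes "C1_map f"
  obtains L where "L > 0" and "\<And>u v l l'. norm u \<le> R \<Longrightarrow> norm v \<le> R \<Longrightarrow> l \<in> {a..b} \<Longrightarrow>
      l' \<in> {a..b} \<Longrightarrow> norm (f u l - f v l') \<le> L * (norm (u - v) + \<bar>l - l'\<bar>)"
proof -
  obtain D :: "'a \<times> real \<Rightarrow> ('a \<times> real) \<Rightarrow>\<^sub>L 'a" where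
    D: "\<And>p. ((\<lambda>q. f (fst q) (snd q)) has_derivative blinfun_apply (D p)) (at p)"
       "continuous_on UNIV D"
    using assms unfolding C1_map_def by blast
  define S where "S = cball (0::'a) R \<times> {a..b}"
  have "compact (D ` S)"
    unfolding S_def
    by (intro compact_continuous_image continuous_on_subset[OF D(2)] compact_Times) auto
  then obtain B where B: "\<forall>x\<in>D ` S. norm x \<le> B" using compact_imp_bounded bounded_iff by metis
  have bnd: "norm (f (fst p) (snd p) - f (fst q) (snd q)) \<le> B * norm (p - q)"
    if "p \<in> S" "q \<in> S" for p q
  proof (rule differentiable_bound[OF _ _ _ that])
    show "convex S" unfolding S_def by (intro convex_Times convex_cball convex_real_interval)
    show "((\<lambda>q. f (fst q) (snd q)) has_derivative blinfun_apply (D x)) (at x within S)" for x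
      using D(1) has_derivative_at_withinI by blast
    show "onorm (blinfun_apply (D x)) \<le> B" if "x \<in> S" for x
      using B that by (simp add: norm_blinfun.rep_eq[symmetric])
  qed
  show thesis
  proof (rule that[of "max 1 B"])
    fix u v :: 'a and l l' :: real
    assume "norm u \<le> R" "norm v \<le> R" "l \<in> {a..b}" "l' \<in> {a..b}"
    then have "norm (f u l - f v l') \<le> B * norm ((u, l) - (v, l'))"
      using bnd[of "(u,l)" "(v,l')"] by (simp add: S_def)
    also have "\<dots> \<le> max 1 B * (norm (u - v) + \<bar>l - l'\<bar>)"
      using norm_Pair_le[of "u - v" "l - l'"] by (intro mult_mono) auto
    finally show "norm (f u l - f v l') \<le> max 1 B * (norm (u - v) + \<bar>l - l'\<bar>)" .
  qed simp
qed

lemma C1_map_solutions_unique: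
  fixes f :: "'a::euclidean_space \<Rightarrow> real \<Rightarrow> 'a"
  assumes "C1_map f" and l: "\<And>t. l t \<in> {a..b}"
    and x: "\<And>t. (x has_vector_derivative f (x t) (l t)) (at t)"
    and y: "\<And>t. (y has_vector_derivative f (y t) (l t)) (at t)"
    and eq: "x s = y s"
  shows "x t = y t"
proof -
  have cx: "continuous_on UNIV x"
    by (metis x continuous_at_imp_continuous_on has_vector_derivative_continuous)
  have cy: "continuous_on UNIV y"
    by (metis y continuous_at_imp_continuous_on has_vector_derivative_continuous)
  define J where "J = {min s t..max s t}"
  have "compact (x ` J \<union> y ` J)" unfolding J_def
    by (intro compact_Un compact_continuous_image continuous_on_subset[OF cx]
        continuous_on_subset[OF cy] compact_Icc) auto
  then obtain R where R: "\<forall>z\<in>x ` J \<union> y ` J. norm z \<le> R"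
    using compact_imp_bounded bounded_iff by metis
  obtain L where L: "L > 0" "\<And>u v l l'. norm u \<le> R \<Longrightarrow> norm v \<le> R \<Longrightarrow> l \<in> {a..b} \<Longrightarrow>
      l' \<in> {a..b} \<Longrightarrow> norm (f u l - f v l') \<le> L * (norm (u - v) + \<bar>l - l'\<bar>)"
    using C1_map_lipschitz_on_bounded[OF assms(1)] by blast
  have lipJ: "norm (f (x u) (l u) - f (y u) (l u)) \<le> L * norm (x u - y u)" if "u \<in> J" for u
    using L(2)[OF _ _ l l, of "x u" "y u" u u] R that by simp
  show ?thesis
  proof (cases "s \<le> t")
    case True
    show ?thesis
      by (rule solutions_agree_forward[where L=L, OF True _ x y _ eq]) (use L True lipJ in \<open>auto simp: J_def\<close>)
  next
    case False
    have rev: "((\<lambda>u. z (- u)) has_vector_derivative - f (z (- u)) (l (- u))) (at u)"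
      if z: "\<And>t. (z has_vector_derivative f (z t) (l t)) (at t)" for z u
    proof -
      have "((z \<circ> uminus) has_vector_derivative (-1) *\<^sub>R f (z (- u)) (l (- u))) (at u)"
        by (rule vector_diff_chain_at) (auto intro!: derivative_eq_intros z)
      then show ?thesis by (simp add: o_def)
    qed
    have "(\<lambda>u. x (- u)) (- t) = (\<lambda>u. y (- u)) (- t)"
    proof (rule solutions_agree_forward[of "- s" "- t" L, OF _ _ rev[OF x] rev[OF y]])
      fix u assume "u \<in> {- s..- t}"
      then have "- u \<in> J" using False by (auto simp: J_def)
      then show "norm (- f (x (- u)) (l (- u)) - - f (y (- u)) (l (- u))) \<le> L * norm (x (- u) - y (- u))"
        using lipJ by (simp add: norm_minus_commute)
    qed (use False L eq in auto)
    then show ?thesis by simp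
  qed
qed

lemma parameter_shift_lipschitz:
  assumes "parameter_shift \<Lambda> lm lp"
  obtains M where "M > 0" and "\<And>a b. \<bar>\<Lambda> a - \<Lambda> b\<bar> \<le> M * \<bar>a - b\<bar>"
proof -
  obtain D where D0: "D 0 = \<Lambda>" and dD: "\<And>k t. (D k has_real_derivative D (Suc k) t) (at t)"
    using assms unfolding parameter_shift_def smooth_fun_def by blast
  have d\<Lambda>: "(\<Lambda> has_real_derivative D 1 t) (at t)" for t using dD[of 0 t] D0 by simp
  then have "deriv \<Lambda> = D 1" using DERIV_imp_deriv by blast
  then have "(D 1 \<longlongrightarrow> 0) at_top" "(D 1 \<longlongrightarrow> 0) at_bot"
    using assms unfolding parameter_shift_def by auto
  then have "eventually (\<lambda>t. \<bar>D 1 t\<bar> < 1) at_top" "eventually (\<lambda>t. \<bar>D 1 t\<bar> < 1) at_bot"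
    using tendstoD[of "D 1" 0 _ 1] by auto
  then obtain N N' where N: "\<And>t. t \<ge> N \<Longrightarrow> \<bar>D 1 t\<bar> < 1" and N': "\<And>t. t \<le> N' \<Longrightarrow> \<bar>D 1 t\<bar> < 1"
    unfolding eventually_at_top_linorder eventually_at_bot_linorder by blast
  have "continuous_on {N'..N} (D 1)"
    by (metis dD DERIV_isCont continuous_at_imp_continuous_on One_nat_def)
  then have "compact (D 1 ` {N'..N})" by (intro compact_continuous_image) auto
  then obtain B where B: "\<forall>x\<in>D 1 ` {N'..N}. norm x \<le> B" using compact_imp_bounded bounded_iff by metis
  have "\<bar>D 1 t\<bar> \<le> max 1 B" for t
  proof (cases "t \<ge> N \<or> t \<le> N'")
    case False
    then have "norm (D 1 t) \<le> B" using B by auto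
    then show ?thesis by simp
  qed (use N N' in force)
  then show thesis
    using field_differentiable_bound[of UNIV \<Lambda> "D 1" "max 1 B"] d\<Lambda>
    by (intro that[of "max 1 B"]) (auto simp: has_field_derivative_at_within)
qed

lemma real_split_multiple:
  fixes T t t0 :: real
  assumes T: "T > 0" and t: "t \<ge> t0"
  obtains n :: nat and u where "0 \<le> u" "u < T" "t = t0 + real n * T + u"
proof -
  define x where "x = (t - t0) / T"
  define n where "n = nat \<lfloor>x\<rfloor>"
  have nx: "real n = of_int \<lfloor>x\<rfloor>" using T t by (simp add: n_def x_def)
  have xT: "x * T = t - t0" using T by (simp add: x_def)
  have "real n * T \<le> x * T" using nx T by (intro mult_right_mono) auto
  moreover have "x * T < (real n + 1) * T" using nx T by (intro mult_strict_right_mono) linarith+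
  ultimately show thesis using xT by (intro that[of "t - t0 - real n * T" n]) (auto simp: algebra_simps)
qed

lemma infdist_lt_of_semidist_lt:
  assumes "compact X" and "semidist X Y < e" and "x \<in> X"
  shows "infdist x Y < e"
proof -
  have "bdd_above ((\<lambda>x. infdist x Y) ` X)"
    by (intro bounded_imp_bdd_above compact_imp_bounded compact_continuous_image
        continuous_intros assms(1))
  then have "infdist x Y \<le> semidist X Y"
    using assms(3) by (auto simp: semidist_def intro: cSUP_upper)
  then show ?thesis using assms(2) by linarith
qed

lemma semidist_le_of_infdist_le:
  assumes "\<And>x. x \<in> X \<Longrightarrow> infdist x Y \<le> c" and "c \<ge> 0"
  shows "semidist X Y \<le> c"
  using assms by (auto simp: semidist_def intro: cSUP_least)

lemma infdist_le_add_excess: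
  fixes X :: "'a::heine_borel set"
  assumes "compact X" "X \<noteq> {}" and "\<forall>a\<in>X. infdist a Y \<le> h"
  shows "infdist x Y \<le> infdist x X + h"
proof -
  obtain a where a: "a \<in> X" "infdist x X = dist x a"
    using infdist_attains_inf[OF compact_imp_closed[OF assms(1)] assms(2)] by blast
  have "infdist x Y \<le> infdist a Y + dist x a" by (rule infdist_triangle)
  then show ?thesis using a assms(3) by auto
qed

lemma closed_infdist_le: "closed {z. infdist z S \<le> c}"
  by (intro closed_Collect_le continuous_on_infdist continuous_on_id continuous_on_const)

lemma limit_set_subset_of_eventually_near:
  assumes K: "closed K" "K \<noteq> {}"
    and near: "\<And>\<epsilon>. \<epsilon> > 0 \<Longrightarrow> \<exists>\<tau>>0. \<forall>t\<ge>\<tau>. F t \<subseteq> {z. infdist z K \<le> \<epsilon>}"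
  shows "(\<Inter>\<tau>\<in>{0<..}. closure (\<Union>t\<in>{\<tau>..}. F t)) \<subseteq> K"
proof
  fix y assume y: "y \<in> (\<Inter>\<tau>\<in>{0<..}. closure (\<Union>t\<in>{\<tau>..}. F t))"
  have "infdist y K \<le> \<epsilon>" if \<epsilon>: "\<epsilon> > 0" for \<epsilon>
  proof -
    obtain \<tau> where \<tau>: "\<tau> > 0" "\<forall>t\<ge>\<tau>. F t \<subseteq> {z. infdist z K \<le> \<epsilon>}"
      using near[OF \<epsilon>] by blast
    have "y \<in> closure (\<Union>t\<in>{\<tau>..}. F t)" using y \<tau>(1) by blast
    also have "\<dots> \<subseteq> {z. infdist z K \<le> \<epsilon>}"
      using \<tau>(2) by (intro closure_minimal closed_infdist_le) auto
    finally show ?thesis by simp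
  qed
  then have "infdist y K = 0"
    by (metis infdist_nonneg dual_order.antisym field_le_epsilon add_0)
  then show "y \<in> K" using in_closed_iff_infdist_zero[OF K] by simp
qed

locale uniformly_stable_shift =
  fixes f :: "'a::euclidean_space \<Rightarrow> real \<Rightarrow> 'a" and \<Lambda> :: "real \<Rightarrow> real" and lm lp :: real
    and A :: "real \<Rightarrow> 'a set" and \<mu> \<eta>0 C :: real
  assumes C1: "C1_map f" and lm_less_lp: "lm < lp" and shift: "parameter_shift \<Lambda> lm lp"
    and cocycle_solutions: "\<forall>r>0. \<forall>s x0. \<exists>x. is_solution (\<lambda>t x. f x (\<Lambda> (r * t))) x \<and> x s = x0"
    and flow_solutions: "\<forall>l\<in>{lm..lp}. \<forall>x0. \<exists>x. is_solution (\<lambda>t x. f x l) x \<and> x 0 = x0"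
    and branch: "branch_of_attractors f lm lp A"
    and stable: "\<forall>l\<in>{lm..lp}. exp_stable_attractor_with (flow_of f l) (A l) \<mu> \<eta>0 C"
begin

lemma stability_constants: "\<mu> > 0" "\<eta>0 > 0" "C \<ge> 1"
  using stable lm_less_lp unfolding exp_stable_attractor_with_def by (auto dest: bspec[of _ _ lm])

lemma A_nonempty: "l \<in> {lm..lp} \<Longrightarrow> A l \<noteq> {}"
  and A_compact: "l \<in> {lm..lp} \<Longrightarrow> compact (A l)"
  using stable unfolding exp_stable_attractor_with_def by auto

lemma A_closed: "l \<in> {lm..lp} \<Longrightarrow> closed (A l)"
  using A_compact compact_imp_closed by blast

lemma attractor_contraction:
  "l \<in> {lm..lp} \<Longrightarrow> infdist x (A l) < \<eta>0 \<Longrightarrow> t > 0 \<Longrightarrow>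
    infdist (flow_of f l t x) (A l) \<le> C * exp (- \<mu> * t) * infdist x (A l)"
  using stable unfolding exp_stable_attractor_with_def nbhd_def by auto

lemma \<Lambda>_in_range: "\<Lambda> t \<in> {lm..lp}"
  using shift unfolding parameter_shift_def by (simp add: less_imp_le)

lemma \<Lambda>_eventually_near_lm: "e > 0 \<Longrightarrow> \<exists>S. \<forall>u\<le>S. \<bar>\<Lambda> u - lm\<bar> < e"
  using shift tendstoD[of \<Lambda> lm at_bot e]
  by (auto simp: parameter_shift_def eventually_at_bot_linorder dist_real_def)

lemma \<Lambda>_eventually_near_lp: "e > 0 \<Longrightarrow> \<exists>S. \<forall>u\<ge>S. \<bar>\<Lambda> u - lp\<bar> < e"
  using shift tendstoD[of \<Lambda> lp at_top e]
  by (auto simp: parameter_shift_def eventually_at_top_linorder dist_real_def)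

lemma branch_near:
  assumes l: "l \<in> {lm..lp}" and e: "e > 0"
  obtains d where "d > 0" and "\<And>l'. l' \<in> {lm..lp} \<Longrightarrow> \<bar>l' - l\<bar> < d \<Longrightarrow>
     (\<forall>a\<in>A l'. infdist a (A l) < e) \<and> (\<forall>a\<in>A l. infdist a (A l') < e)"
proof -
  obtain d where d: "d > 0" "\<forall>l'\<in>{lm..lp}. \<bar>l' - l\<bar> < d \<longrightarrow> hausdist_sets (A l') (A l) < e"
    using branch l e unfolding branch_of_attractors_def by blast
  show thesis
  proof (rule that[OF d(1)])
    fix l' assume "l' \<in> {lm..lp}" "\<bar>l' - l\<bar> < d"
    then have "semidist (A l') (A l) < e" "semidist (A l) (A l') < e"
      using d(2) by (auto simp: hausdist_sets_def)
    then show "(\<forall>a\<in>A l'. infdist a (A l) < e) \<and> (\<forall>a\<in>A l. infdist a (A l') < e)"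
      using A_compact l \<open>l' \<in> {lm..lp}\<close> by (blast intro: infdist_lt_of_semidist_lt)
  qed
qed

lemma branch_uniformly_near:
  assumes e: "e > 0"
  obtains d where "d > 0" and "\<And>l1 l2 a. l1 \<in> {lm..lp} \<Longrightarrow> l2 \<in> {lm..lp} \<Longrightarrow> \<bar>l1 - l2\<bar> < d \<Longrightarrow>
     a \<in> A l1 \<Longrightarrow> infdist a (A l2) \<le> e"
proof -
  have "\<forall>l\<in>{lm..lp}. \<exists>d>0. \<forall>l'\<in>{lm..lp}. \<bar>l' - l\<bar> < d \<longrightarrow>
     (\<forall>a\<in>A l'. infdist a (A l) < e/2) \<and> (\<forall>a\<in>A l. infdist a (A l') < e/2)"
    using branch_near[of _ "e/2"] e by (metis half_gt_zero)
  then obtain dd where dd: "\<And>l. l \<in> {lm..lp} \<Longrightarrow> dd l > 0 \<and> (\<forall>l'\<in>{lm..lp}. \<bar>l' - l\<bar> < dd l \<longrightarrow>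
     (\<forall>a\<in>A l'. infdist a (A l) < e/2) \<and> (\<forall>a\<in>A l. infdist a (A l') < e/2))"
    by metis
  have cover: "{lm..lp} \<subseteq> \<Union>((\<lambda>l. ball l (dd l)) ` {lm..lp})"
    using dd by force
  obtain \<epsilon> where \<epsilon>: "\<epsilon> > 0" "\<And>x. x \<in> {lm..lp} \<Longrightarrow> \<exists>G\<in>(\<lambda>l. ball l (dd l)) ` {lm..lp}. ball x \<epsilon> \<subseteq> G"
    using Heine_Borel_lemma[OF compact_Icc cover] by auto
  show thesis
  proof (rule that[OF \<epsilon>(1)])
    fix l1 l2 a assume l1: "l1 \<in> {lm..lp}" and l2: "l2 \<in> {lm..lp}" and d12: "\<bar>l1 - l2\<bar> < \<epsilon>"
      and a: "a \<in> A l1"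
    obtain c where c: "c \<in> {lm..lp}" "ball l1 \<epsilon> \<subseteq> ball c (dd c)" using \<epsilon>(2)[OF l1] by auto
    have "l1 \<in> ball l1 \<epsilon>" "l2 \<in> ball l1 \<epsilon>" using \<epsilon>(1) d12 by (auto simp: dist_real_def)
    then have "l1 \<in> ball c (dd c)" "l2 \<in> ball c (dd c)" using c(2) by blast+
    then have "\<bar>l1 - c\<bar> < dd c" "\<bar>l2 - c\<bar> < dd c" by (auto simp: dist_real_def abs_minus_commute)
    then have "infdist a (A c) < e/2" "\<forall>b\<in>A c. infdist b (A l2) \<le> e/2"
      using dd[OF c(1)] l1 l2 a by (auto intro: less_imp_le)
    then show "infdist a (A l2) \<le> e"
      using infdist_le_add_excess[OF A_compact[OF c(1)] A_nonempty[OF c(1)], of "A l2" "e/2" a] by linarith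
  qed
qed

lemma branch_bounded: "\<exists>R\<ge>0. \<forall>l\<in>{lm..lp}. \<forall>a\<in>A l. norm a \<le> R"
proof -
  obtain d where d: "d > 0" "\<And>l1 l2 a. l1 \<in> {lm..lp} \<Longrightarrow> l2 \<in> {lm..lp} \<Longrightarrow> \<bar>l1 - l2\<bar> < d \<Longrightarrow>
     a \<in> A l1 \<Longrightarrow> infdist a (A l2) \<le> 1"
    using branch_uniformly_near[of 1] by auto
  have "{lm..lp} \<subseteq> (\<Union>c\<in>{lm..lp}. ball c d)" using d(1) by force
  then obtain G where G: "G \<subseteq> {lm..lp}" "finite G" "{lm..lp} \<subseteq> (\<Union>c\<in>G. ball c d)"
    using compactE_image[OF compact_Icc] by (metis open_ball)
  have "compact (\<Union>c\<in>G. A c)" using G A_compact by blast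
  then obtain B where B: "\<forall>x\<in>(\<Union>c\<in>G. A c). norm x \<le> B"
    using compact_imp_bounded bounded_iff by metis
  have "norm a \<le> B + 1" if l: "l \<in> {lm..lp}" and a: "a \<in> A l" for l a
  proof -
    obtain c where c: "c \<in> G" "\<bar>l - c\<bar> < d"
      using G l by (force simp: dist_real_def abs_minus_commute)
    then have cI: "c \<in> {lm..lp}" using G by blast
    obtain b where b: "b \<in> A c" "infdist a (A c) = dist a b"
      using infdist_attains_inf[OF A_closed[OF cI] A_nonempty[OF cI]] by blast
    have "norm a \<le> norm b + dist a b"
      by (metis dist_norm norm_triangle_sub add.commute)
    then show ?thesis using d(2)[OF l cI c(2) a] b B c(1) by fastforce
  qed
  then show ?thesis by (intro exI[of _ "max 0 (B + 1)"]) force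
qed

lemma cocycle_eq_solution:
  assumes r: "r > 0" and x: "is_solution (\<lambda>t x. f x (\<Lambda> (r * t))) x"
  shows "cocycle f \<Lambda> r t s (x s) = x t"
  unfolding cocycle_def sol_map_def
proof (rule the_equality)
  fix z assume "\<exists>x'. is_solution (\<lambda>t x. f x (\<Lambda> (r * t))) x' \<and> x' s = x s \<and> x' t = z"
  then obtain x' where x': "is_solution (\<lambda>t x. f x (\<Lambda> (r * t))) x'" "x' s = x s" "x' t = z" by blast
  have "x' t = x t"
    by (rule C1_map_solutions_unique[OF C1, of "\<lambda>t. \<Lambda> (r * t)"])
      (use x x' \<Lambda>_in_range in \<open>auto simp: is_solution_def\<close>)
  then show "z = x t" using x' by simp
qed (use x in blast)

lemma flow_eq_solution:
  assumes l: "l \<in> {lm..lp}" and y: "is_solution (\<lambda>t x. f x l) y"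
  shows "flow_of f l t (y 0) = y t"
  unfolding flow_of_def sol_map_def
proof (rule the_equality)
  fix z assume "\<exists>x'. is_solution (\<lambda>t x. f x l) x' \<and> x' 0 = y 0 \<and> x' t = z"
  then obtain x' where x': "is_solution (\<lambda>t x. f x l) x'" "x' 0 = y 0" "x' t = z" by blast
  have "x' t = y t"
    by (rule C1_map_solutions_unique[OF C1, of "\<lambda>t. l"]) (use y x' l in \<open>auto simp: is_solution_def\<close>)
  then show "z = y t" using x' by simp
qed (use y in blast)

lemma cocycle_compose:
  assumes r: "r > 0"
  shows "cocycle f \<Lambda> r t u (cocycle f \<Lambda> r u s p) = cocycle f \<Lambda> r t s p"
proof -
  obtain x where "is_solution (\<lambda>t x. f x (\<Lambda> (r * t))) x" "x s = p" using cocycle_solutions r by blast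
  then show ?thesis using cocycle_eq_solution[OF r] by metis
qed

lemma cocycle_same_time: "r > 0 \<Longrightarrow> cocycle f \<Lambda> r t t p = p"
  using cocycle_solutions cocycle_eq_solution by metis

section \<open>Comparison with the frozen flow\<close>

lemma frozen_flow_near_attractor:
  assumes l: "l \<in> {lm..lp}" and p: "infdist p (A l) < \<eta>0" and v: "v \<ge> 0"
  shows "infdist (flow_of f l v p) (A l) \<le> C * exp (- \<mu> * v) * infdist p (A l)"
proof (cases "v = 0")
  case True
  obtain y where "is_solution (\<lambda>t x. f x l) y" "y 0 = p" using flow_solutions l by blast
  then have "flow_of f l v p = p" using flow_eq_solution[OF l] True by metis
  then show ?thesis
    using True mult_right_mono[OF stability_constants(3) infdist_nonneg[of p "A l"]] by simp
qed (use attractor_contraction[OF l p] v in auto)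

definition attractor_bound :: real where
  "attractor_bound = (SOME R. R \<ge> 0 \<and> (\<forall>l\<in>{lm..lp}. \<forall>a\<in>A l. norm a \<le> R))"

lemma attractor_bound: "attractor_bound \<ge> 0" "l \<in> {lm..lp} \<Longrightarrow> a \<in> A l \<Longrightarrow> norm a \<le> attractor_bound"
  using someI_ex[OF branch_bounded] unfolding attractor_bound_def by auto

lemma norm_le_of_infdist_attractor:
  assumes l: "l \<in> {lm..lp}" and x: "infdist x (A l) \<le> c"
  shows "norm x \<le> attractor_bound + c"
proof -
  obtain a where "a \<in> A l" "infdist x (A l) = dist x a"
    using infdist_attains_inf[OF A_closed[OF l] A_nonempty[OF l]] by blast
  moreover have "norm x \<le> norm a + dist x a"
    by (metis dist_norm norm_triangle_sub add.commute)
  ultimately show ?thesis using x attractor_bound(2)[OF l] by fastforce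
qed

text \<open>Every frozen trajectory started in the \<open>\<eta>0\<close>-neighbourhood of an attractor stays in the ball
  of radius \<open>attractor_bound + C * \<eta>0\<close>; the extra unit leaves room for the solution being compared.\<close>

definition working_radius :: real where
  "working_radius = attractor_bound + C * \<eta>0 + 1"

definition lip_f :: real where
  "lip_f = (SOME L. L > 0 \<and> (\<forall>u v l l'. norm u \<le> working_radius \<longrightarrow> norm v \<le> working_radius
     \<longrightarrow> l \<in> {lm..lp} \<longrightarrow> l' \<in> {lm..lp} \<longrightarrow> norm (f u l - f v l') \<le> L * (norm (u - v) + \<bar>l - l'\<bar>)))"

lemma lip_f: "lip_f > 0"
  "norm u \<le> working_radius \<Longrightarrow> norm v \<le> working_radius \<Longrightarrow> l \<in> {lm..lp} \<Longrightarrow> l' \<in> {lm..lp} \<Longrightarrow>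
   norm (f u l - f v l') \<le> lip_f * (norm (u - v) + \<bar>l - l'\<bar>)"
proof -
  have "\<exists>L. L > 0 \<and> (\<forall>u v l l'. norm u \<le> working_radius \<longrightarrow> norm v \<le> working_radius
     \<longrightarrow> l \<in> {lm..lp} \<longrightarrow> l' \<in> {lm..lp} \<longrightarrow> norm (f u l - f v l') \<le> L * (norm (u - v) + \<bar>l - l'\<bar>))"
    by (rule C1_map_lipschitz_on_bounded[OF C1]) blast
  from someI_ex[OF this] show "lip_f > 0"
    "norm u \<le> working_radius \<Longrightarrow> norm v \<le> working_radius \<Longrightarrow> l \<in> {lm..lp} \<Longrightarrow> l' \<in> {lm..lp} \<Longrightarrow>
     norm (f u l - f v l') \<le> lip_f * (norm (u - v) + \<bar>l - l'\<bar>)"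
    unfolding lip_f_def by auto
qed

definition gronwall_factor :: "real \<Rightarrow> real" where
  "gronwall_factor T = lip_f * exp ((2 * lip_f + 1) * T / 2)"

lemma gronwall_factor_pos: "gronwall_factor T > 0"
  using lip_f(1) by (simp add: gronwall_factor_def)

lemma cocycle_near_frozen_attractor:
  assumes r: "r > 0" and l: "l \<in> {lm..lp}" and T: "T > 0" and p: "infdist p (A l) < \<eta>0"
    and E: "E \<ge> 0" and drift: "\<And>v. v \<in> {t0..t0+T} \<Longrightarrow> \<bar>\<Lambda> (r * v) - l\<bar> \<le> E"
    and small: "gronwall_factor T * E < 1" and u: "u \<in> {0..T}"
  shows "infdist (cocycle f \<Lambda> r (t0 + u) t0 p) (A l)
     \<le> C * exp (- \<mu> * u) * infdist p (A l) + gronwall_factor T * E"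
proof -
  obtain x where x: "is_solution (\<lambda>t x. f x (\<Lambda> (r * t))) x" "x t0 = p"
    using cocycle_solutions r by blast
  obtain y0 where y0: "is_solution (\<lambda>t x. f x l) y0" "y0 0 = p" using flow_solutions l by blast
  define y where "y = (\<lambda>t. y0 (t - t0))"
  have dy: "(y has_vector_derivative f (y t) l) (at t)" for t
  proof -
    have "((\<lambda>t. t - t0) has_vector_derivative 1) (at t)" by (auto intro!: derivative_eq_intros)
    from vector_diff_chain_at[OF this, of y0 "f (y0 (t - t0)) l"] show ?thesis
      using y0(1) unfolding is_solution_def y_def o_def by simp
  qed
  have y_near: "infdist (y (t0 + v)) (A l) \<le> C * exp (- \<mu> * v) * infdist p (A l)" if "v \<ge> 0" for v
    using frozen_flow_near_attractor[OF l p that] flow_eq_solution[OF l y0(1)] y0(2)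
    by (simp add: y_def)
  have y_bounded: "norm (y t) \<le> working_radius - 1" if t: "t \<in> {t0..t0+T}" for t
  proof -
    have "C * exp (- \<mu> * (t - t0)) * infdist p (A l) \<le> C * 1 * \<eta>0"
      using t p stability_constants by (intro mult_mono) (auto simp: infdist_nonneg)
    then have "infdist (y t) (A l) \<le> C * \<eta>0" using y_near[of "t - t0"] t by simp
    then show ?thesis
      using norm_le_of_infdist_attractor[OF l] by (simp add: working_radius_def)
  qed
  have "exp ((2 * lip_f + 1) * T) = exp ((2 * lip_f + 1) * T / 2)^2"
    by (simp add: power2_eq_square exp_add[symmetric])
  then have "(norm (x t0 - y t0)^2 + (lip_f * E)^2) * exp ((2 * lip_f + 1) * (t0 + T - t0))
      \<le> (gronwall_factor T * E)^2"
    using x(2) y0(2) by (simp add: y_def gronwall_factor_def power_mult_distrib)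
  then have close: "\<forall>t\<in>{t0..t0+T}. norm (x t - y t) \<le> gronwall_factor T * E"
    using x(1) dy lip_f T E \<Lambda>_in_range l drift y_bounded small gronwall_factor_pos
    by (intro solutions_stay_close[where lx="\<lambda>t. \<Lambda> (r * t)" and ly="\<lambda>t. l" and I="{lm..lp}"
        and R=working_radius and L=lip_f and E=E]) (auto simp: is_solution_def less_imp_le)
  have "cocycle f \<Lambda> r (t0 + u) t0 p = x (t0 + u)"
    using cocycle_eq_solution[OF r x(1)] x(2) by metis
  moreover have "infdist (x (t0 + u)) (A l) \<le> infdist (y (t0 + u)) (A l) + dist (x (t0 + u)) (y (t0 + u))"
    by (rule infdist_triangle)
  moreover have "dist (x (t0 + u)) (y (t0 + u)) \<le> gronwall_factor T * E"
    using close u by (simp add: dist_norm)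
  moreover have "infdist (y (t0 + u)) (A l) \<le> C * exp (- \<mu> * u) * infdist p (A l)"
    using y_near u by simp
  ultimately show ?thesis by simp
qed

definition lip_\<Lambda> :: real where
  "lip_\<Lambda> = (SOME M. M > 0 \<and> (\<forall>a b. \<bar>\<Lambda> a - \<Lambda> b\<bar> \<le> M * \<bar>a - b\<bar>))"

lemma lip_\<Lambda>: "lip_\<Lambda> > 0" "\<bar>\<Lambda> a - \<Lambda> b\<bar> \<le> lip_\<Lambda> * \<bar>a - b\<bar>"
proof -
  have "\<exists>M. M > 0 \<and> (\<forall>a b. \<bar>\<Lambda> a - \<Lambda> b\<bar> \<le> M * \<bar>a - b\<bar>)"
    by (rule parameter_shift_lipschitz[OF shift]) blast
  from someI_ex[OF this] show "lip_\<Lambda> > 0" "\<bar>\<Lambda> a - \<Lambda> b\<bar> \<le> lip_\<Lambda> * \<bar>a - b\<bar>"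
    unfolding lip_\<Lambda>_def by auto
qed

definition window_length :: real where
  "window_length = ln (4 * C) / \<mu>"

lemma window_length: "window_length > 0" "C * exp (- \<mu> * window_length) = 1/4"
proof -
  have C: "C \<ge> 1" and \<mu>: "\<mu> > 0" using stability_constants by auto
  then show "window_length > 0" by (simp add: window_length_def)
  have "exp (- \<mu> * window_length) = 1 / (4 * C)"
    using C \<mu> by (simp add: window_length_def exp_minus inverse_eq_divide)
  then show "C * exp (- \<mu> * window_length) = 1/4" using C by simp
qed

text \<open>Within one window the parameter moves by at most \<open>lip_\<Lambda> * r * window_length\<close>.  Admissibility
  of \<open>r\<close> bounds both the resulting displacement of the attractor and the Gronwall error by \<open>\<rho>/8\<close>,
  so that together with the contraction factor \<open>1/4\<close> of a window the \<open>\<rho>\<close>-neighbourhood of the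
  branch is carried into itself.\<close>

definition admissible :: "real \<Rightarrow> real \<Rightarrow> bool" where
  "admissible r \<rho> \<longleftrightarrow> r > 0 \<and> 0 < \<rho> \<and> \<rho> < \<eta>0 \<and>
     (\<forall>l1\<in>{lm..lp}. \<forall>l2\<in>{lm..lp}. \<bar>l1 - l2\<bar> \<le> lip_\<Lambda> * r * window_length \<longrightarrow>
        (\<forall>a\<in>A l1. infdist a (A l2) \<le> \<rho>/8)) \<and>
     gronwall_factor window_length * (lip_\<Lambda> * r * window_length) < 1 \<and>
     gronwall_factor window_length * (lip_\<Lambda> * r * window_length) \<le> \<rho>/8"

lemma admissible_for_small_r:
  assumes \<rho>: "0 < \<rho>" "\<rho> < \<eta>0"
  shows "\<exists>\<delta>>0. \<forall>r. 0 < r \<and> r < \<delta> \<longrightarrow> admissible r \<rho>"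
proof -
  obtain d where d: "d > 0" "\<And>l1 l2 a. l1 \<in> {lm..lp} \<Longrightarrow> l2 \<in> {lm..lp} \<Longrightarrow> \<bar>l1 - l2\<bar> < d \<Longrightarrow>
     a \<in> A l1 \<Longrightarrow> infdist a (A l2) \<le> \<rho>/8"
    using branch_uniformly_near[of "\<rho>/8"] \<rho> by auto
  define M where "M = lip_\<Lambda> * window_length"
  define G where "G = gronwall_factor window_length * M"
  have M: "M > 0" and G: "G > 0"
    using lip_\<Lambda>(1) window_length(1) gronwall_factor_pos by (simp_all add: M_def G_def)
  define \<delta> where "\<delta> = min (d / M) (min (\<rho>/8) (1/2) / G)"
  have "admissible r \<rho>" if r: "0 < r" "r < \<delta>" for r
  proof -
    have "r * M < d" and rG: "r * G < min (\<rho>/8) (1/2)"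
      using r M G by (simp_all add: \<delta>_def pos_less_divide_eq)
    have drift: "lip_\<Lambda> * r * window_length = r * M" by (simp add: M_def)
    have "gronwall_factor window_length * (lip_\<Lambda> * r * window_length) < 1"
      "gronwall_factor window_length * (lip_\<Lambda> * r * window_length) \<le> \<rho>/8"
      using rG unfolding drift by (auto simp: G_def mult.left_commute)
    moreover have "\<forall>l1\<in>{lm..lp}. \<forall>l2\<in>{lm..lp}. \<bar>l1 - l2\<bar> \<le> lip_\<Lambda> * r * window_length \<longrightarrow>
        (\<forall>a\<in>A l1. infdist a (A l2) \<le> \<rho>/8)"
      using d(2) \<open>r * M < d\<close> unfolding drift by force
    ultimately show ?thesis using r \<rho> unfolding admissible_def by blast
  qed
  moreover have "\<delta> > 0" using d M G \<rho> by (simp add: \<delta>_def)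
  ultimately show ?thesis by blast
qed

lemma admissible_window_estimate:
  assumes adm: "admissible r \<rho>" and p: "infdist p (A (\<Lambda> (r * t0))) \<le> \<rho>"
    and u: "u \<in> {0..window_length}"
  shows "infdist (cocycle f \<Lambda> r (t0 + u) t0 p) (A (\<Lambda> (r * (t0 + u))))
      \<le> C * exp (- \<mu> * u) * infdist p (A (\<Lambda> (r * t0))) + \<rho>/4"
proof -
  define l where "l = \<Lambda> (r * t0)"
  define E where "E = lip_\<Lambda> * r * window_length"
  have l: "l \<in> {lm..lp}" unfolding l_def by (rule \<Lambda>_in_range)
  have r: "r > 0" and \<rho>: "\<rho> < \<eta>0"
    and excess: "\<And>l1 l2. l1 \<in> {lm..lp} \<Longrightarrow> l2 \<in> {lm..lp} \<Longrightarrow> \<bar>l1 - l2\<bar> \<le> E \<Longrightarrow>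
       \<forall>a\<in>A l1. infdist a (A l2) \<le> \<rho>/8"
    and small: "gronwall_factor window_length * E < 1" "gronwall_factor window_length * E \<le> \<rho>/8"
    using adm unfolding admissible_def E_def by auto
  have drift: "\<bar>\<Lambda> (r * v) - l\<bar> \<le> E" if "v \<in> {t0..t0 + window_length}" for v
  proof -
    have "\<bar>\<Lambda> (r * v) - l\<bar> \<le> lip_\<Lambda> * \<bar>r * v - r * t0\<bar>" unfolding l_def by (rule lip_\<Lambda>(2))
    also have "\<bar>r * v - r * t0\<bar> = r * (v - t0)"
      using that r by (simp add: right_diff_distrib[symmetric])
    also have "lip_\<Lambda> * (r * (v - t0)) \<le> lip_\<Lambda> * (r * window_length)"
      using that r lip_\<Lambda>(1) by (intro mult_left_mono) auto
    finally show ?thesis by (simp add: E_def mult.assoc)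
  qed
  have "\<forall>a\<in>A l. infdist a (A (\<Lambda> (r * (t0 + u)))) \<le> \<rho>/8"
    using drift[of "t0 + u"] u l \<Lambda>_in_range[of "r * (t0 + u)"]
    by (intro excess) (auto simp: l_def abs_minus_commute)
  then have "infdist (cocycle f \<Lambda> r (t0 + u) t0 p) (A (\<Lambda> (r * (t0 + u))))
      \<le> infdist (cocycle f \<Lambda> r (t0 + u) t0 p) (A l) + \<rho>/8"
    by (rule infdist_le_add_excess[OF A_compact[OF l] A_nonempty[OF l]])
  moreover have "infdist (cocycle f \<Lambda> r (t0 + u) t0 p) (A l)
      \<le> C * exp (- \<mu> * u) * infdist p (A l) + gronwall_factor window_length * E"
    using p \<rho> lip_\<Lambda>(1) r window_length(1)
    by (intro cocycle_near_frozen_attractor[OF r l _ _ _ drift small(1) u])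
      (auto simp: l_def E_def)
  ultimately show ?thesis using small(2) unfolding l_def by linarith
qed

lemma admissible_window_invariant:
  assumes adm: "admissible r \<rho>" and p: "infdist p (A (\<Lambda> (r * t0))) \<le> \<rho>"
  shows "infdist (cocycle f \<Lambda> r (t0 + window_length) t0 p) (A (\<Lambda> (r * (t0 + window_length)))) \<le> \<rho>"
proof -
  have "C * exp (- \<mu> * window_length) * infdist p (A (\<Lambda> (r * t0)))
      \<le> C * exp (- \<mu> * window_length) * \<rho>"
    using p stability_constants by (intro mult_left_mono) auto
  also have "\<dots> = \<rho>/4" using window_length(2) by simp
  finally show ?thesis
    using admissible_window_estimate[OF adm p, of window_length] window_length(1) adm
    by (simp add: admissible_def)
qed

lemma admissible_tracking:
  assumes adm: "admissible r \<rho>" and p: "infdist p (A (\<Lambda> (r * t0))) \<le> \<rho>" and t: "t \<ge> t0"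
  shows "infdist (cocycle f \<Lambda> r t t0 p) (A (\<Lambda> (r * t))) \<le> (C + 1) * \<rho>"
proof -
  have r: "r > 0" and \<rho>: "\<rho> > 0" using adm by (auto simp: admissible_def)
  let ?q = "\<lambda>n::nat. cocycle f \<Lambda> r (t0 + real n * window_length) t0 p"
  have iter: "infdist (?q n) (A (\<Lambda> (r * (t0 + real n * window_length)))) \<le> \<rho>" for n
  proof (induction n)
    case 0
    then show ?case using p cocycle_same_time[OF r] by simp
  next
    case (Suc n)
    from admissible_window_invariant[OF adm this] show ?case
      using cocycle_compose[OF r] by (simp add: algebra_simps)
  qed
  obtain n :: nat and u where u: "0 \<le> u" "u < window_length" and tn: "t = t0 + real n * window_length + u"
    using real_split_multiple[OF window_length(1) t] by blast
  have "C * exp (- \<mu> * u) * infdist (?q n) (A (\<Lambda> (r * (t0 + real n * window_length)))) \<le> C * 1 * \<rho>"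
    using iter[of n] u stability_constants by (intro mult_mono) (auto simp: infdist_nonneg)
  then show ?thesis
    using admissible_window_estimate[OF adm iter[of n], of u] u tn \<rho> cocycle_compose[OF r]
    by (simp add: algebra_simps)
qed

section \<open>Pullback fibres\<close>

lemma pullback_set_eta_mono:
  assumes "\<eta> \<le> \<eta>'"
  shows "pullback_set_eta f \<Lambda> r S \<eta> t \<subseteq> pullback_set_eta f \<Lambda> r S \<eta>' t"
proof -
  have "nbhd \<eta> S \<subseteq> nbhd \<eta>' S" using assms by (auto simp: nbhd_def)
  then show ?thesis
    unfolding pullback_set_eta_def by (intro INF_mono' closure_mono UN_mono image_mono) auto
qed

lemma pullback_set_eta_subset:
  assumes Z: "closed Z" and \<tau>: "\<tau> > 0"
    and reach: "\<And>s x. s \<le> - \<tau> \<Longrightarrow> x \<in> nbhd \<eta> S \<Longrightarrow> cocycle f \<Lambda> r t s x \<in> Z"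
  shows "pullback_set_eta f \<Lambda> r S \<eta> t \<subseteq> Z"
proof -
  have "pullback_set_eta f \<Lambda> r S \<eta> t \<subseteq> closure (\<Union>s\<in>{..-\<tau>}. cocycle f \<Lambda> r t s ` nbhd \<eta> S)"
    unfolding pullback_set_eta_def using \<tau> by blast
  also have "\<dots> \<subseteq> Z" using reach by (intro closure_minimal Z) auto
  finally show ?thesis .
qed

lemma cocycle_enters_smaller_nbhd:
  assumes r: "r > 0" and \<eta>: "0 < \<eta>" "\<eta> < \<eta>'" "\<eta>' < \<eta>0"
  shows "\<exists>T S. \<forall>s\<le>S. \<forall>x\<in>nbhd \<eta>' (A lm). cocycle f \<Lambda> r (s + T) s x \<in> nbhd \<eta> (A lm)"
proof -
  have C: "C \<ge> 1" and \<mu>: "\<mu> > 0" using stability_constants by auto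
  have lm: "lm \<in> {lm..lp}" using lm_less_lp by simp
  define T where "T = max 1 (ln (2 * C * \<eta>' / \<eta>) / \<mu>)"
  have T: "T > 0" by (simp add: T_def)
  have "ln (2 * C * \<eta>' / \<eta>) / \<mu> \<le> T" by (simp add: T_def)
  then have "ln (2 * C * \<eta>' / \<eta>) \<le> \<mu> * T"
    using \<mu> by (simp add: pos_divide_le_eq mult.commute)
  then have "exp (- \<mu> * T) \<le> exp (- ln (2 * C * \<eta>' / \<eta>))" by simp
  also have "\<dots> = \<eta> / (2 * C * \<eta>')" using C \<eta> by (simp add: exp_minus inverse_eq_divide)
  finally have contraction: "C * exp (- \<mu> * T) * \<eta>' \<le> \<eta> / 2"
    using C \<eta> by (simp add: field_simps)
  define E where "E = min 1 \<eta> / (4 * gronwall_factor T)"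
  have E: "E > 0" and error: "gronwall_factor T * E = min 1 \<eta> / 4"
    using \<eta> gronwall_factor_pos[of T] by (simp_all add: E_def)
  obtain S where S: "\<forall>u\<le>S. \<bar>\<Lambda> u - lm\<bar> < E" using \<Lambda>_eventually_near_lm[OF E] by blast
  have "cocycle f \<Lambda> r (s + T) s x \<in> nbhd \<eta> (A lm)"
    if s: "s \<le> S / r - T" and x: "x \<in> nbhd \<eta>' (A lm)" for s x
  proof -
    have drift: "\<bar>\<Lambda> (r * v) - lm\<bar> \<le> E" if "v \<in> {s..s+T}" for v
    proof -
      have "v \<le> S / r" using that s by simp
      then have "r * v \<le> S" using r by (simp add: pos_le_divide_eq mult.commute)
      then show ?thesis using S by (simp add: less_imp_le)
    qed
    have "infdist x (A lm) < \<eta>'" using x by (simp add: nbhd_def)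
    then have "infdist (cocycle f \<Lambda> r (s + T) s x) (A lm)
        \<le> C * exp (- \<mu> * T) * infdist x (A lm) + gronwall_factor T * E"
      using \<eta> E error T by (intro cocycle_near_frozen_attractor[OF r lm T _ _ drift]) auto
    moreover have "C * exp (- \<mu> * T) * infdist x (A lm) \<le> C * exp (- \<mu> * T) * \<eta>'"
      using \<open>infdist x (A lm) < \<eta>'\<close> C by (intro mult_left_mono) auto
    moreover have "min 1 \<eta> \<le> \<eta>" by simp
    ultimately have "infdist (cocycle f \<Lambda> r (s + T) s x) (A lm) < \<eta>"
      using contraction error \<eta>(1) by linarith
    then show ?thesis by (simp add: nbhd_def)
  qed
  then show ?thesis by blast
qed

lemma pullback_set_eta_antimono:
  assumes r: "r > 0" and \<eta>: "0 < \<eta>" "\<eta> \<le> \<eta>'" "\<eta>' < \<eta>0"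
  shows "pullback_set_eta f \<Lambda> r (A lm) \<eta>' t \<subseteq> pullback_set_eta f \<Lambda> r (A lm) \<eta> t"
proof (cases "\<eta> = \<eta>'")
  case False
  then obtain T S where TS: "\<forall>s\<le>S. \<forall>x\<in>nbhd \<eta>' (A lm). cocycle f \<Lambda> r (s + T) s x \<in> nbhd \<eta> (A lm)"
    using cocycle_enters_smaller_nbhd[OF r \<eta>(1) _ \<eta>(3)] \<eta>(2) by fastforce
  have later: "closure (\<Union>s\<in>{..-\<tau>'}. cocycle f \<Lambda> r t s ` nbhd \<eta>' (A lm))
      \<subseteq> closure (\<Union>s\<in>{..-\<tau>}. cocycle f \<Lambda> r t s ` nbhd \<eta> (A lm))"
    if "\<tau>' = max 1 (max (\<tau> + T) (- S))" for \<tau> \<tau>'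
  proof (intro closure_mono subsetI)
    fix z assume "z \<in> (\<Union>s\<in>{..-\<tau>'}. cocycle f \<Lambda> r t s ` nbhd \<eta>' (A lm))"
    then obtain s x where s: "s \<le> - \<tau>'" and x: "x \<in> nbhd \<eta>' (A lm)" and z: "z = cocycle f \<Lambda> r t s x"
      by auto
    have "z = cocycle f \<Lambda> r t (s + T) (cocycle f \<Lambda> r (s + T) s x)"
      using cocycle_compose[OF r] z by simp
    moreover have "cocycle f \<Lambda> r (s + T) s x \<in> nbhd \<eta> (A lm)" "s + T \<le> - \<tau>"
      using TS s x that by auto
    ultimately show "z \<in> (\<Union>s\<in>{..-\<tau>}. cocycle f \<Lambda> r t s ` nbhd \<eta> (A lm))" by blast
  qed
  show ?thesis
    unfolding pullback_set_eta_def
  proof (intro INT_greatest subsetI)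
    fix \<tau> :: real and y
    assume "y \<in> (\<Inter>\<tau>\<in>{0<..}. closure (\<Union>s\<in>{..-\<tau>}. cocycle f \<Lambda> r t s ` nbhd \<eta>' (A lm)))"
    then have "y \<in> closure (\<Union>s\<in>{..-max 1 (max (\<tau> + T) (- S))}. cocycle f \<Lambda> r t s ` nbhd \<eta>' (A lm))"
      by (rule INT_D) simp
    then show "y \<in> closure (\<Union>s\<in>{..-\<tau>}. cocycle f \<Lambda> r t s ` nbhd \<eta> (A lm))"
      using later by blast
  qed
qed simp

lemma pullback_fibre_eq:
  assumes r: "r > 0" and \<eta>: "0 < \<eta>" "\<eta> < \<eta>0"
  shows "pullback_fibre f \<Lambda> r (A lm) t = pullback_set_eta f \<Lambda> r (A lm) \<eta> t"
proof -
  have indep: "pullback_set_eta f \<Lambda> r (A lm) \<eta>' t = pullback_set_eta f \<Lambda> r (A lm) \<eta> t"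
    if "0 < \<eta>'" "\<eta>' < \<eta>0" for \<eta>'
    using pullback_set_eta_antimono[OF r] pullback_set_eta_mono \<eta> that
    by (metis linorder_le_cases subset_antisym)
  show ?thesis
    unfolding pullback_fibre_def
  proof (rule the_equality)
    fix S assume "\<exists>\<eta>1>0. \<forall>\<eta>'. 0 < \<eta>' \<and> \<eta>' < \<eta>1 \<longrightarrow> pullback_set_eta f \<Lambda> r (A lm) \<eta>' t = S"
    then obtain \<eta>1 where "\<eta>1 > 0" "\<forall>\<eta>'. 0 < \<eta>' \<and> \<eta>' < \<eta>1 \<longrightarrow> pullback_set_eta f \<Lambda> r (A lm) \<eta>' t = S"
      by blast
    then show "S = pullback_set_eta f \<Lambda> r (A lm) \<eta> t"
      using indep[of "min \<eta>1 \<eta>0 / 2"] stability_constants(2) by auto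
  qed (use indep stability_constants(2) in blast)
qed

lemma near_A_minus_in_past:
  assumes r: "r > 0" and \<rho>: "\<rho> > 0"
  shows "\<exists>S. \<forall>s\<le>S. \<forall>x. infdist x (A lm) < \<rho>/2 \<longrightarrow> infdist x (A (\<Lambda> (r * s))) \<le> \<rho>"
proof -
  have lm: "lm \<in> {lm..lp}" using lm_less_lp by simp
  obtain d where d: "d > 0" "\<And>l. l \<in> {lm..lp} \<Longrightarrow> \<bar>l - lm\<bar> < d \<Longrightarrow> \<forall>a\<in>A lm. infdist a (A l) < \<rho>/2"
    using branch_near[OF lm, of "\<rho>/2"] \<rho> by (metis half_gt_zero)
  obtain S where S: "\<forall>u\<le>S. \<bar>\<Lambda> u - lm\<bar> < d" using \<Lambda>_eventually_near_lm[OF d(1)] by blast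
  have "infdist x (A (\<Lambda> (r * s))) \<le> \<rho>" if s: "s \<le> S / r" and x: "infdist x (A lm) < \<rho>/2" for s x
  proof -
    have "\<bar>\<Lambda> (r * s) - lm\<bar> < d" using S s r by (simp add: pos_le_divide_eq mult.commute)
    then have "\<forall>a\<in>A lm. infdist a (A (\<Lambda> (r * s))) \<le> \<rho>/2"
      using d(2) \<Lambda>_in_range by (meson less_imp_le)
    then have "infdist x (A (\<Lambda> (r * s))) \<le> infdist x (A lm) + \<rho>/2"
      by (rule infdist_le_add_excess[OF A_compact[OF lm] A_nonempty[OF lm]])
    then show ?thesis using x by linarith
  qed
  then show ?thesis by blast
qed

lemma pullback_fibre_subset:
  assumes r: "r > 0" and \<rho>: "\<rho> > 0" and Z: "closed Z"
    and reach: "\<And>s x. s \<le> S \<Longrightarrow> infdist x (A (\<Lambda> (r * s))) \<le> \<rho> \<Longrightarrow> cocycle f \<Lambda> r t s x \<in> Z"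
  shows "pullback_fibre f \<Lambda> r (A lm) t \<subseteq> Z"
proof -
  obtain S0 where S0: "\<forall>s\<le>S0. \<forall>x. infdist x (A lm) < \<rho>/2 \<longrightarrow> infdist x (A (\<Lambda> (r * s))) \<le> \<rho>"
    using near_A_minus_in_past[OF r \<rho>] by blast
  define \<eta> where "\<eta> = min (\<rho>/2) (\<eta>0/2)"
  have \<eta>: "0 < \<eta>" "\<eta> < \<eta>0" using \<rho> stability_constants by (auto simp: \<eta>_def)
  show ?thesis
    unfolding pullback_fibre_eq[OF r \<eta>]
  proof (rule pullback_set_eta_subset[OF Z, of "max 1 (max (- S) (- S0))"])
    fix s x assume "s \<le> - max 1 (max (- S) (- S0))" and "x \<in> nbhd \<eta> (A lm)"
    then show "cocycle f \<Lambda> r t s x \<in> Z"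
      using S0 by (intro reach) (auto simp: nbhd_def \<eta>_def)
  qed simp
qed

lemma pullback_fibre_near_branch:
  assumes \<epsilon>: "\<epsilon> > 0"
  shows "\<exists>\<delta>>0. \<forall>r t. 0 < r \<and> r < \<delta> \<longrightarrow> semidist (pullback_fibre f \<Lambda> r (A lm) t) (A (\<Lambda> (r * t))) < \<epsilon>"
proof -
  have C: "C \<ge> 1" using stability_constants by simp
  define \<rho> where "\<rho> = min (\<epsilon> / (2 * (C + 1))) (\<eta>0 / 2)"
  have \<rho>: "0 < \<rho>" "\<rho> < \<eta>0" using \<epsilon> C stability_constants by (auto simp: \<rho>_def)
  have "(C + 1) * \<rho> \<le> (C + 1) * (\<epsilon> / (2 * (C + 1)))"
    using C by (intro mult_left_mono) (auto simp: \<rho>_def)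
  also have "\<dots> = \<epsilon> / 2" using C by (simp add: field_simps)
  finally have C\<rho>: "(C + 1) * \<rho> < \<epsilon>" using \<epsilon> by simp
  obtain \<delta> where \<delta>: "\<delta> > 0" "\<forall>r. 0 < r \<and> r < \<delta> \<longrightarrow> admissible r \<rho>"
    using admissible_for_small_r[OF \<rho>] by blast
  have "semidist (pullback_fibre f \<Lambda> r (A lm) t) (A (\<Lambda> (r * t))) \<le> (C + 1) * \<rho>"
    if r: "0 < r" "r < \<delta>" for r t
  proof -
    have "pullback_fibre f \<Lambda> r (A lm) t \<subseteq> {z. infdist z (A (\<Lambda> (r * t))) \<le> (C + 1) * \<rho>}"
      using \<delta>(2) r by (intro pullback_fibre_subset[OF r(1) \<rho>(1) closed_infdist_le, of t])
        (auto intro: admissible_tracking)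
    then show ?thesis using C \<rho> by (intro semidist_le_of_infdist_le) auto
  qed
  then show ?thesis using \<delta>(1) C\<rho> by (meson le_less_trans)
qed

section \<open>Tracking of the final attractor\<close>

definition late_window_estimate :: "real \<Rightarrow> real \<Rightarrow> real \<Rightarrow> bool" where
  "late_window_estimate r T \<beta> \<longleftrightarrow> (\<forall>t1 q u. t1 \<ge> T \<longrightarrow> infdist q (A lp) < \<eta>0 \<longrightarrow>
     u \<in> {0..window_length} \<longrightarrow>
     infdist (cocycle f \<Lambda> r (t1 + u) t1 q) (A lp) \<le> C * exp (- \<mu> * u) * infdist q (A lp) + \<beta>)"

lemma late_window_estimateD:
  "late_window_estimate r T \<beta> \<Longrightarrow> t1 \<ge> T \<Longrightarrow> infdist q (A lp) < \<eta>0 \<Longrightarrow> u \<in> {0..window_length} \<Longrightarrow>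
    infdist (cocycle f \<Lambda> r (t1 + u) t1 q) (A lp) \<le> C * exp (- \<mu> * u) * infdist q (A lp) + \<beta>"
  unfolding late_window_estimate_def by blast

lemma late_window_estimate_exists:
  assumes r: "r > 0" and \<beta>: "0 < \<beta>" "\<beta> < 1"
  shows "\<exists>T. late_window_estimate r T \<beta>"
proof -
  have lp: "lp \<in> {lm..lp}" using lm_less_lp by simp
  define E where "E = \<beta> / gronwall_factor window_length"
  have E: "E > 0" "gronwall_factor window_length * E = \<beta>"
    using \<beta> gronwall_factor_pos[of window_length] by (simp_all add: E_def)
  obtain S where S: "\<forall>u\<ge>S. \<bar>\<Lambda> u - lp\<bar> < E" using \<Lambda>_eventually_near_lp[OF E(1)] by blast
  have "late_window_estimate r (S / r) \<beta>"
    unfolding late_window_estimate_def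
  proof (intro allI impI)
    fix t1 q u assume t1: "t1 \<ge> S / r" and q: "infdist q (A lp) < \<eta>0" and u: "u \<in> {0..window_length}"
    have drift: "\<bar>\<Lambda> (r * v) - lp\<bar> \<le> E" if "v \<in> {t1..t1 + window_length}" for v
    proof -
      have "S / r \<le> v" using that t1 by simp
      then have "S \<le> r * v" using r by (simp add: pos_divide_le_eq mult.commute)
      then show ?thesis using S by (simp add: less_imp_le)
    qed
    show "infdist (cocycle f \<Lambda> r (t1 + u) t1 q) (A lp) \<le> C * exp (- \<mu> * u) * infdist q (A lp) + \<beta>"
      using cocycle_near_frozen_attractor[OF r lp window_length(1) q _ drift _ u] E \<beta> by simp
  qed
  then show ?thesis by blast
qed

lemma late_windows_halve_distance:
  assumes r: "r > 0" and est: "late_window_estimate r T \<beta>" and \<beta>: "0 < \<beta>" "\<beta> \<le> \<eta>0/32"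
    and t0: "t0 \<ge> T" and w: "infdist w (A lp) \<le> \<eta>0/4"
  shows "infdist (cocycle f \<Lambda> r (t0 + real k * window_length) t0 w) (A lp) \<le> \<eta>0/4 / 2^k + 2 * \<beta>"
proof (induction k)
  case 0
  show ?case using w cocycle_same_time[OF r] \<beta> by simp
next
  case (Suc k)
  let ?t = "t0 + real k * window_length" and ?q = "cocycle f \<Lambda> r (t0 + real k * window_length) t0 w"
  have \<eta>0: "\<eta>0 > 0" using stability_constants by simp
  have "\<eta>0/4 / 2^k \<le> \<eta>0/4" using \<eta>0 by (simp add: divide_le_eq_1 field_simps)
  then have "infdist ?q (A lp) < \<eta>0" using Suc \<beta> \<eta>0 by linarith
  moreover have "?t \<ge> T" using t0 window_length(1) mult_nonneg_nonneg[of "real k" window_length] by linarith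
  ultimately have window_k: "infdist (cocycle f \<Lambda> r (?t + window_length) ?t ?q) (A lp)
      \<le> C * exp (- \<mu> * window_length) * infdist ?q (A lp) + \<beta>"
    using window_length(1) by (intro late_window_estimateD[OF est]) auto
  have "infdist (cocycle f \<Lambda> r (t0 + real (Suc k) * window_length) t0 w) (A lp)
      = infdist (cocycle f \<Lambda> r (?t + window_length) ?t ?q) (A lp)"
    using cocycle_compose[OF r] by (simp add: algebra_simps)
  also have "\<dots> \<le> C * exp (- \<mu> * window_length) * infdist ?q (A lp) + \<beta>"
    by (rule window_k)
  also have "\<dots> = infdist ?q (A lp) / 4 + \<beta>"
    using window_length(2) by simp
  also have "\<dots> \<le> (\<eta>0/4 / 2^k) / 2 + 2 * \<beta>"
  proof -
    have gen: "\<And>a X. X \<le> a + 2 * \<beta> \<Longrightarrow> 0 \<le> a \<Longrightarrow> X / 4 + \<beta> \<le> a / 2 + 2 * \<beta>"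
      using \<beta>(1) by linarith
    show ?thesis by (rule gen[OF Suc]) (use \<eta>0 in simp)
  qed
  finally show ?case by simp
qed

lemma late_distance_bound:
  assumes r: "r > 0" and est: "late_window_estimate r T \<beta>" and \<beta>: "0 < \<beta>" "\<beta> \<le> \<eta>0/32"
    and t0: "t0 \<ge> T" and w: "infdist w (A lp) \<le> \<eta>0/4" and u: "u \<in> {0..window_length}"
  shows "infdist (cocycle f \<Lambda> r (t0 + real k * window_length + u) t0 w) (A lp)
    \<le> C * (\<eta>0/4 / 2^k + 2 * \<beta>) + \<beta>"
proof -
  let ?t = "t0 + real k * window_length" and ?q = "cocycle f \<Lambda> r (t0 + real k * window_length) t0 w"
  have \<eta>0: "\<eta>0 > 0" and C: "C \<ge> 1" and \<mu>: "\<mu> > 0" using stability_constants by auto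
  have q: "infdist ?q (A lp) \<le> \<eta>0/4 / 2^k + 2 * \<beta>"
    by (rule late_windows_halve_distance[OF r est \<beta> t0 w])
  have "\<eta>0/4 / 2^k \<le> \<eta>0/4" using \<eta>0 by (simp add: divide_le_eq_1 field_simps)
  then have "infdist ?q (A lp) < \<eta>0" using q \<beta> \<eta>0 by linarith
  moreover have "?t \<ge> T" using t0 window_length(1) mult_nonneg_nonneg[of "real k" window_length] by linarith
  ultimately have "infdist (cocycle f \<Lambda> r (?t + u) ?t ?q) (A lp) \<le> C * exp (- \<mu> * u) * infdist ?q (A lp) + \<beta>"
    using u by (intro late_window_estimateD[OF est]) auto
  also have "\<dots> \<le> C * 1 * (\<eta>0/4 / 2^k + 2 * \<beta>) + \<beta>"
    using q u C \<mu> by (intro add_right_mono mult_mono) (auto simp: infdist_nonneg)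
  finally show ?thesis using cocycle_compose[OF r] by simp
qed

lemma late_convergence_to_A_plus:
  assumes r: "r > 0" and \<epsilon>: "\<epsilon> > 0"
  obtains T N where "\<And>t0 w t. t0 \<ge> T \<Longrightarrow> infdist w (A lp) \<le> \<eta>0/4 \<Longrightarrow> t \<ge> t0 + N \<Longrightarrow>
      infdist (cocycle f \<Lambda> r t t0 w) (A lp) \<le> \<epsilon>"
proof -
  have C: "C \<ge> 1" and \<eta>0: "\<eta>0 > 0" using stability_constants by auto
  define \<beta> where "\<beta> = min (1/2) (min (\<eta>0/32) (\<epsilon> / (8 * C)))"
  have \<beta>: "0 < \<beta>" "\<beta> < 1" "\<beta> \<le> \<eta>0/32" "\<beta> \<le> \<epsilon> / (8 * C)"
    using C \<eta>0 \<epsilon> by (auto simp: \<beta>_def)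
  have C\<beta>: "C * \<beta> \<le> \<epsilon> / 8" using \<beta>(4) C by (simp add: field_simps)
  have "\<epsilon> / (8 * C) \<le> \<epsilon> / 8" using C \<epsilon> by (intro divide_left_mono) auto
  then have \<beta>\<epsilon>: "\<beta> \<le> \<epsilon> / 8" using \<beta>(4) by linarith
  obtain T where est: "late_window_estimate r T \<beta>"
    using late_window_estimate_exists[OF r \<beta>(1,2)] by blast
  obtain k0 :: nat where k0: "C * \<eta>0 / \<epsilon> < 2 ^ k0" using real_arch_pow[of 2] by auto
  show thesis
  proof (rule that[of T "real k0 * window_length"])
    fix t0 w t assume t0: "t0 \<ge> T" and w: "infdist w (A lp) \<le> \<eta>0/4"
      and t: "t \<ge> t0 + real k0 * window_length"
    have "t \<ge> t0" using t window_length(1) mult_nonneg_nonneg[of "real k0" window_length] by linarith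
    then obtain k :: nat and u where u: "0 \<le> u" "u < window_length"
      and tk: "t = t0 + real k * window_length + u"
      using real_split_multiple[OF window_length(1)] by blast
    have "real k0 * window_length < (real k + 1) * window_length"
      using t tk u by (simp add: algebra_simps)
    then have "k0 \<le> k" using window_length(1) by (simp add: mult_less_cancel_right)
    then have "C * \<eta>0 / \<epsilon> < 2 ^ k" using k0 power_increasing[of k0 k "2::real"] by linarith
    then have far: "C * (\<eta>0/4 / 2^k) \<le> \<epsilon>/4" using \<epsilon> by (simp add: field_simps)
    have "infdist (cocycle f \<Lambda> r t t0 w) (A lp) \<le> C * (\<eta>0/4 / 2^k + 2 * \<beta>) + \<beta>"
      unfolding tk using u by (intro late_distance_bound[OF r est \<beta>(1,3) t0 w]) auto
    also have "\<dots> = C * (\<eta>0/4 / 2^k) + 2 * (C * \<beta>) + \<beta>"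
      by (simp add: algebra_simps)
    also have "\<dots> \<le> \<epsilon>"
    proof -
      have "\<And>a b c. a \<le> \<epsilon>/4 \<Longrightarrow> b \<le> \<epsilon>/8 \<Longrightarrow> c \<le> \<epsilon>/8 \<Longrightarrow> a + 2 * b + c \<le> \<epsilon>"
        using \<epsilon> by linarith
      from this[OF far C\<beta> \<beta>\<epsilon>] show ?thesis .
    qed
    finally show "infdist (cocycle f \<Lambda> r t t0 w) (A lp) \<le> \<epsilon>" .
  qed
qed

lemma late_fibres_near_A_plus:
  assumes adm: "admissible r \<rho>" and C\<rho>: "(C + 1) * \<rho> \<le> \<eta>0/8" and \<epsilon>: "\<epsilon> > 0"
  shows "\<exists>\<tau>>0. \<forall>t\<ge>\<tau>. pullback_fibre f \<Lambda> r (A lm) t \<subseteq> {z. infdist z (A lp) \<le> \<epsilon>}"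
proof -
  have r: "r > 0" and \<rho>: "\<rho> > 0" using adm by (auto simp: admissible_def)
  have lp: "lp \<in> {lm..lp}" using lm_less_lp by simp
  obtain T N where late: "\<And>t0 w t. t0 \<ge> T \<Longrightarrow> infdist w (A lp) \<le> \<eta>0/4 \<Longrightarrow> t \<ge> t0 + N \<Longrightarrow>
      infdist (cocycle f \<Lambda> r t t0 w) (A lp) \<le> \<epsilon>"
    using late_convergence_to_A_plus[OF r \<epsilon>] by blast
  obtain d where d: "d > 0" "\<And>l. l \<in> {lm..lp} \<Longrightarrow> \<bar>l - lp\<bar> < d \<Longrightarrow> \<forall>a\<in>A l. infdist a (A lp) < \<eta>0/8"
    using branch_near[OF lp, of "\<eta>0/8"] stability_constants by (metis divide_pos_pos zero_less_numeral)
  obtain S where S: "\<forall>u\<ge>S. \<bar>\<Lambda> u - lp\<bar> < d" using \<Lambda>_eventually_near_lp[OF d(1)] by blast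
  define t0 where "t0 = max T (S / r)"
  have "S / r \<le> t0" by (simp add: t0_def)
  then have "S \<le> r * t0" using r by (simp add: pos_divide_le_eq mult.commute)
  then have "\<forall>a\<in>A (\<Lambda> (r * t0)). infdist a (A lp) \<le> \<eta>0/8"
    using S d(2)[OF \<Lambda>_in_range] by (meson less_imp_le)
  then have near_lp: "infdist y (A lp) \<le> \<eta>0/4" if "infdist y (A (\<Lambda> (r * t0))) \<le> \<eta>0/8" for y
    using infdist_le_add_excess[OF A_compact A_nonempty, of "\<Lambda> (r * t0)" "A lp" "\<eta>0/8" y]
      \<Lambda>_in_range that by simp
  have "pullback_fibre f \<Lambda> r (A lm) t \<subseteq> {z. infdist z (A lp) \<le> \<epsilon>}" if t: "t \<ge> t0 + N" for t
  proof (rule pullback_fibre_subset[OF r \<rho> closed_infdist_le])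
    fix s x assume "s \<le> t0" and "infdist x (A (\<Lambda> (r * s))) \<le> \<rho>"
    then have "infdist (cocycle f \<Lambda> r t0 s x) (A (\<Lambda> (r * t0))) \<le> \<eta>0/8"
      using admissible_tracking[OF adm] C\<rho> by fastforce
    then have "infdist (cocycle f \<Lambda> r t t0 (cocycle f \<Lambda> r t0 s x)) (A lp) \<le> \<epsilon>"
      using late near_lp t by (simp add: t0_def)
    then show "cocycle f \<Lambda> r t s x \<in> {z. infdist z (A lp) \<le> \<epsilon>}"
      using cocycle_compose[OF r] by simp
  qed
  then show ?thesis by (intro exI[of _ "max 1 (t0 + N)"]) auto
qed

lemma pullback_limit_set_subset_A_plus:
  "\<exists>\<delta>>0. \<forall>r. 0 < r \<and> r < \<delta> \<longrightarrow> pullback_limit_set f \<Lambda> r (A lm) \<subseteq> A lp"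
proof -
  have C: "C \<ge> 1" and \<eta>0: "\<eta>0 > 0" using stability_constants by auto
  define \<rho> where "\<rho> = \<eta>0 / (8 * (C + 1))"
  have "\<rho> \<le> \<eta>0 / 8" unfolding \<rho>_def using C \<eta>0 by (intro divide_left_mono) auto
  moreover have "0 < \<rho>" using C \<eta>0 by (simp add: \<rho>_def)
  ultimately have \<rho>: "0 < \<rho>" "\<rho> < \<eta>0" using \<eta>0 by linarith+
  have C\<rho>: "(C + 1) * \<rho> = \<eta>0/8" using C by (simp add: \<rho>_def field_simps)
  obtain \<delta> where \<delta>: "\<delta> > 0" "\<forall>r. 0 < r \<and> r < \<delta> \<longrightarrow> admissible r \<rho>"
    using admissible_for_small_r[OF \<rho>] by blast
  have lp: "lp \<in> {lm..lp}" using lm_less_lp by simp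
  have "pullback_limit_set f \<Lambda> r (A lm) \<subseteq> A lp" if "0 < r" "r < \<delta>" for r
    unfolding pullback_limit_set_def
    using late_fibres_near_A_plus \<delta>(2) that C\<rho>
    by (intro limit_set_subset_of_eventually_near[OF A_closed[OF lp] A_nonempty[OF lp]]) auto
  then show ?thesis using \<delta>(1) by blast
qed

end

theorem theorem3p1:
  fixes f :: "'a::euclidean_space \<Rightarrow> real \<Rightarrow> 'a"
    and \<Lambda> :: "real \<Rightarrow> real" and lm lp :: real and A :: "real \<Rightarrow> 'a set"
  assumes "C1_map f"
    and "lm < lp"
    and "parameter_shift \<Lambda> lm lp"
    and "\<forall>r>0. \<forall>s x0. \<exists>x. is_solution (\<lambda>t x. f x (\<Lambda> (r * t))) x \<and> x s = x0"
    and "\<forall>l\<in>{lm..lp}. \<forall>x0. \<exists>x. is_solution (\<lambda>t x. f x l) x \<and> x 0 = x0"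
    and "uniformly_stable_branch f lm lp A"
  shows "(\<forall>\<epsilon>>0. \<exists>\<delta>>0. \<forall>r t. 0 < r \<and> r < \<delta> \<longrightarrow>
            semidist (pullback_fibre f \<Lambda> r (A lm) t) (A (\<Lambda> (r * t))) < \<epsilon>)
       \<and> (\<exists>\<delta>>0. \<forall>r. 0 < r \<and> r < \<delta> \<longrightarrow> pullback_limit_set f \<Lambda> r (A lm) \<subseteq> A lp)"
proof -
  obtain \<mu> \<eta>0 C where "\<forall>l\<in>{lm..lp}. exp_stable_attractor_with (flow_of f l) (A l) \<mu> \<eta>0 C"
    using assms(6) unfolding uniformly_stable_branch_def by blast
  then interpret uniformly_stable_shift f \<Lambda> lm lp A \<mu> \<eta>0 C
    using assms unfolding uniformly_stable_branch_def by unfold_locales auto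
  show ?thesis
    using pullback_fibre_near_branch pullback_limit_set_subset_A_plus by blast
qed

end
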